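(* For $\zeta\in[a,\tau)$ define $$\widetilde{M_1}(\zeta)=\frac{1}{\epsilon}\left[(1-\tau_1)+\left(\Lambda e^{\epsilon(\omega-\tau)}-\Lambda-(1-\tau_1)\right)e^{\epsilon(\tau-\zeta)}\right],$$ and let $\Lambda_{FP}=\frac{(1-\tau_1)\left(1-e^{-\epsilon(\tau-a)}\right)}{e^{\epsilon(\omega-\tau)}-1}$. If $\Lambda\le\Lambda_{FP}$, then there exists a critical age $\hat{\zeta}\in[a,\tau)$ such that $\widetilde{M_1}(\zeta)<0$ for $a\le\zeta<\hat{\zeta}$, $\widetilde{M_1}(\hat{\zeta})=0$, and $\widetilde{M_1}(\zeta)>0$ for $\hat{\zeta}<\zeta<\tau$ (so that participants younger than $\hat\zeta$ prefer individual savings to PAYGO, older ones prefer PAYGO, and age $\hat\zeta$ is indifferent). If $\Lambda>\Lambda_{FP}$, then $\widetilde{M_1}(\zeta)>0$ for all $\zeta\in[a,\tau)$ (all these participants prefer PAYGO to individual savings, their utility increasing in $\theta$).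
   Context: Parameters: $r>0$, $\mu>r$, $\sigma>0$, real $\gamma,\xi$; $\nu=(\mu-r)/\sigma$ and $\epsilon=\gamma-r-\xi\nu\neq0$. Ages $a<\tau<\omega$; salary tax rate $\tau_1\in[0,1)$. With survival function $s(x)=e^{-A_m(x-a)-\frac{B_m}{\ln c}(c^x-c^a)}$ (Makeham constants $A_m,B_m,c$) and population growth rate $\rho$, $\Lambda=\frac{\int_a^\tau e^{-(\rho+A_m)(u-a)-\frac{B_m}{\ln c}(c^u-c^a)}du}{\int_\tau^\omega e^{-(\rho+A_m)(u-a)-\frac{B_m}{\ln c}(c^u-c^a)}du}>0$ (inverse dependency ratio). Interpretation: $\zeta$ is a participant's age at the decision time; the participant's value function is $\frac1\delta L[x+(\widetilde{M_1}\theta+\widetilde{M_2}k+M_3)w+Ny]^\delta$ with $L>0$, so the sign of $\widetilde{M_1}(\zeta)$ is the sign of the effect of raising the PAYGO contribution rate $\theta$ (relative to individual savings). *)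

theory Defs
  imports "HOL-Analysis.Analysis"
begin

definition market_nu :: "real \<Rightarrow> real \<Rightarrow> real \<Rightarrow> real" where
  "market_nu r \<mu> \<sigma> = (\<mu> - r) / \<sigma>"

definition eps_param :: "real \<Rightarrow> real \<Rightarrow> real \<Rightarrow> real \<Rightarrow> real \<Rightarrow> real" where
  "eps_param r \<mu> \<sigma> \<gamma> \<xi> = \<gamma> - r - \<xi> * market_nu r \<mu> \<sigma>"

text \<open>Population density weight built from the Makeham survival function and growth rate rho.\<close>
definition makeham_weight :: "real \<Rightarrow> real \<Rightarrow> real \<Rightarrow> real \<Rightarrow> real \<Rightarrow> real \<Rightarrow> real" where
  "makeham_weight \<rho> Am Bm c a u =
     exp (- (\<rho> + Am) * (u - a) - Bm / ln c * (c powr u - c powr a))"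

definition inv_dep_ratio :: "real \<Rightarrow> real \<Rightarrow> real \<Rightarrow> real \<Rightarrow> real \<Rightarrow> real \<Rightarrow> real \<Rightarrow> real" where
  "inv_dep_ratio \<rho> Am Bm c a \<tau> \<omega> =
     integral {a..\<tau>} (makeham_weight \<rho> Am Bm c a) / integral {\<tau>..\<omega>} (makeham_weight \<rho> Am Bm c a)"

definition M1_tilde :: "real \<Rightarrow> real \<Rightarrow> real \<Rightarrow> real \<Rightarrow> real \<Rightarrow> real \<Rightarrow> real" where
  "M1_tilde \<epsilon> \<tau>1 \<Lambda> \<omega> \<tau> \<zeta> =
     (1 / \<epsilon>) * ((1 - \<tau>1) + (\<Lambda> * exp (\<epsilon> * (\<omega> - \<tau>)) - \<Lambda> - (1 - \<tau>1)) * exp (\<epsilon> * (\<tau> - \<zeta>)))"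

definition Lambda_FP :: "real \<Rightarrow> real \<Rightarrow> real \<Rightarrow> real \<Rightarrow> real \<Rightarrow> real" where
  "Lambda_FP \<epsilon> \<tau>1 a \<tau> \<omega> =
     (1 - \<tau>1) * (1 - exp (- \<epsilon> * (\<tau> - a))) / (exp (\<epsilon> * (\<omega> - \<tau>)) - 1)"

end

theory Submission
  imports Defs
begin

text \<open>As a function of the age \<open>\<zeta>\<close>, \<open>M1_tilde\<close> has the form \<open>p + q exp (-\<epsilon> \<zeta>)\<close>, so it is
  either constant or strictly monotone. At retirement age \<open>\<tau>\<close> it equals
  \<open>\<Lambda> (exp (\<epsilon> (\<omega> - \<tau>)) - 1) / \<epsilon> > 0\<close>, and at entry age \<open>a\<close> it is a positive multiple of
  \<open>\<Lambda> - \<Lambda>\<^sub>F\<^sub>P\<close>. If \<open>\<Lambda> > \<Lambda>\<^sub>F\<^sub>P\<close> it is therefore positive at both ends of \<open>[a, \<tau>]\<close> and hence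
  in between; otherwise it increases strictly from a nonpositive to a positive value and
  crosses zero exactly once.\<close>

lemma sgn_exp_diff: "sgn (exp u - exp v) = sgn (u - v :: real)"
  by (cases u v rule: linorder_cases) auto

lemma sgn_exp_affine_diff:
  fixes p q k x y :: real
  shows "sgn ((p + q * exp (k * y)) - (p + q * exp (k * x))) = sgn (q * k * (y - x))"
proof -
  have "(p + q * exp (k * y)) - (p + q * exp (k * x)) = q * (exp (k * y) - exp (k * x))"
    by (simp add: algebra_simps)
  also have "sgn \<dots> = sgn q * sgn (k * y - k * x)"
    by (simp only: sgn_mult sgn_exp_diff)
  also have "\<dots> = sgn (q * k * (y - x))"
    by (simp only: sgn_mult right_diff_distrib[symmetric] mult.assoc)
  finally show ?thesis .
qed

lemma exp_affine_less_iff: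
  fixes p q k x y :: real
  shows "p + q * exp (k * x) < p + q * exp (k * y) \<longleftrightarrow> 0 < q * k * (y - x)"
  using sgn_greater[of "(p + q * exp (k * y)) - (p + q * exp (k * x))"]
  by (simp only: sgn_exp_affine_diff sgn_greater diff_gt_0_iff_gt)

lemma exp_affine_le_iff:
  fixes p q k x y :: real
  shows "p + q * exp (k * x) \<le> p + q * exp (k * y) \<longleftrightarrow> 0 \<le> q * k * (y - x)"
  using zero_le_sgn_iff[of "(p + q * exp (k * y)) - (p + q * exp (k * x))"]
  by (simp only: sgn_exp_affine_diff zero_le_sgn_iff diff_ge_0_iff_ge)

lemma exp_affine_strict_mono:
  fixes p q k a b :: real
  assumes "a < b" and "p + q * exp (k * a) < p + q * exp (k * b)"
  shows "strict_mono (\<lambda>x. p + q * exp (k * x))"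
proof -
  have "0 < q * k"
    using assms exp_affine_less_iff[of p q k a b] by (simp add: zero_less_mult_iff)
  then show ?thesis
    by (intro strict_monoI) (simp only: exp_affine_less_iff mult_pos_pos diff_gt_0_iff_gt)
qed

lemma exp_affine_pos_between:
  fixes p q k a b x :: real
  defines "f \<equiv> \<lambda>x. p + q * exp (k * x)"
  assumes "a \<le> x" "x \<le> b" and "f a > 0" "f b > 0"
  shows "f x > 0"
proof -
  have "f a \<le> f x \<or> f b \<le> f x"
  proof (cases "0 \<le> q * k")
    case True
    then show ?thesis
      using assms(2) exp_affine_le_iff[of p q k a x] unfolding f_def by simp
  next
    case False
    then show ?thesis
      using assms(3) exp_affine_le_iff[of p q k b x] unfolding f_def
      by (simp add: mult_nonpos_nonpos)
  qed
  then show ?thesis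
    using assms(4,5) by linarith
qed

lemma strict_mono_on_sign_change:
  fixes f :: "real \<Rightarrow> real"
  assumes "a \<le> b" and "continuous_on {a..b} f" and "strict_mono_on {a..b} f"
    and "f a \<le> 0" and "0 < f b"
  shows "\<exists>z\<in>{a..<b}. (\<forall>x. a \<le> x \<and> x < z \<longrightarrow> f x < 0) \<and> f z = 0 \<and>
           (\<forall>x. z < x \<and> x < b \<longrightarrow> 0 < f x)"
proof -
  obtain z where z: "a \<le> z" "z \<le> b" "f z = 0"
    using IVT'[of f a 0 b] assms by auto
  have "z \<noteq> b"
    using z(3) assms(5) by auto
  moreover have "f x < 0" if "a \<le> x" "x < z" for x
    using strict_mono_onD[OF assms(3), of x z] that z by simp
  moreover have "0 < f x" if "z < x" "x < b" for x
    using strict_mono_onD[OF assms(3), of z x] that z by simp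
  ultimately show ?thesis
    using z by (intro bexI[of _ z]) auto
qed

lemma exp_minus_one_div_pos:
  fixes e s :: real
  assumes "e \<noteq> 0" and "s > 0"
  shows "(exp (e * s) - 1) / e > 0"
proof (cases "e > 0")
  case True
  then show ?thesis using assms by simp
next
  case False
  then have "e < 0" using assms(1) by simp
  then have "exp (e * s) - 1 < 0" using assms(2) by (simp add: mult_neg_pos)
  then show ?thesis using \<open>e < 0\<close> by (rule divide_neg_neg)
qed

lemma M1_tilde_exp_affine:
  "M1_tilde \<epsilon> \<tau>1 \<Lambda> \<omega> \<tau> \<zeta> =
    (1 - \<tau>1) / \<epsilon> +
    ((\<Lambda> * exp (\<epsilon> * (\<omega> - \<tau>)) - \<Lambda> - (1 - \<tau>1)) * exp (\<epsilon> * \<tau>) / \<epsilon>) * exp (- \<epsilon> * \<zeta>)"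
proof -
  have "exp (\<epsilon> * (\<tau> - \<zeta>)) = exp (\<epsilon> * \<tau>) * exp (- \<epsilon> * \<zeta>)"
    by (simp add: exp_add[symmetric] algebra_simps)
  then show ?thesis
    unfolding M1_tilde_def by (simp only:) (simp add: divide_inverse algebra_simps)
qed

lemma M1_tilde_at_retirement:
  "M1_tilde \<epsilon> \<tau>1 \<Lambda> \<omega> \<tau> \<tau> = \<Lambda> * ((exp (\<epsilon> * (\<omega> - \<tau>)) - 1) / \<epsilon>)"
  unfolding M1_tilde_def by (simp add: field_simps)

lemma M1_tilde_at_entry:
  assumes "\<epsilon> \<noteq> 0" and "\<tau> < \<omega>"
  shows "M1_tilde \<epsilon> \<tau>1 \<Lambda> \<omega> \<tau> a =
    exp (\<epsilon> * (\<tau> - a)) * ((exp (\<epsilon> * (\<omega> - \<tau>)) - 1) / \<epsilon>) * (\<Lambda> - Lambda_FP \<epsilon> \<tau>1 a \<tau> \<omega>)"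
proof -
  have "exp (\<epsilon> * (\<omega> - \<tau>)) \<noteq> 1"
    using assms by simp
  moreover have "exp (\<epsilon> * (\<tau> - a)) * exp (- \<epsilon> * (\<tau> - a)) = 1"
    by (simp add: exp_add[symmetric])
  ultimately show ?thesis
    unfolding M1_tilde_def Lambda_FP_def by (simp add: field_simps)
qed

lemma M1_tilde_at_retirement_pos:
  assumes "\<epsilon> \<noteq> 0" and "\<Lambda> > 0" and "\<tau> < \<omega>"
  shows "M1_tilde \<epsilon> \<tau>1 \<Lambda> \<omega> \<tau> \<tau> > 0"
  unfolding M1_tilde_at_retirement
  using assms by (intro mult_pos_pos exp_minus_one_div_pos) simp_all

lemma M1_tilde_at_entry_nonpos_iff:
  assumes "\<epsilon> \<noteq> 0" and "\<tau> < \<omega>"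
  shows "M1_tilde \<epsilon> \<tau>1 \<Lambda> \<omega> \<tau> a \<le> 0 \<longleftrightarrow> \<Lambda> \<le> Lambda_FP \<epsilon> \<tau>1 a \<tau> \<omega>"
proof -
  have "exp (\<epsilon> * (\<tau> - a)) * ((exp (\<epsilon> * (\<omega> - \<tau>)) - 1) / \<epsilon>) > 0"
    using assms by (intro mult_pos_pos exp_gt_zero exp_minus_one_div_pos) simp_all
  then show ?thesis
    unfolding M1_tilde_at_entry[OF assms]
    by (metis mult_le_cancel_left_pos mult_zero_right diff_le_0_iff_le)
qed

lemma M1_tilde_sign_change:
  assumes "\<epsilon> \<noteq> 0" and "\<Lambda> > 0" and "a < \<tau>" and "\<tau> < \<omega>"
    and "\<Lambda> \<le> Lambda_FP \<epsilon> \<tau>1 a \<tau> \<omega>"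
  shows "\<exists>\<zeta>h\<in>{a..<\<tau>}. (\<forall>\<zeta>. a \<le> \<zeta> \<and> \<zeta> < \<zeta>h \<longrightarrow> M1_tilde \<epsilon> \<tau>1 \<Lambda> \<omega> \<tau> \<zeta> < 0) \<and>
    M1_tilde \<epsilon> \<tau>1 \<Lambda> \<omega> \<tau> \<zeta>h = 0 \<and> (\<forall>\<zeta>. \<zeta>h < \<zeta> \<and> \<zeta> < \<tau> \<longrightarrow> 0 < M1_tilde \<epsilon> \<tau>1 \<Lambda> \<omega> \<tau> \<zeta>)"
proof (rule strict_mono_on_sign_change)
  let ?M = "M1_tilde \<epsilon> \<tau>1 \<Lambda> \<omega> \<tau>"
  obtain p q where M_eq: "?M = (\<lambda>\<zeta>. p + q * exp (- \<epsilon> * \<zeta>))"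
    using M1_tilde_exp_affine by fast
  show "a \<le> \<tau>"
    using assms(3) by simp
  show "?M a \<le> 0"
    using M1_tilde_at_entry_nonpos_iff assms by blast
  show "0 < ?M \<tau>"
    using M1_tilde_at_retirement_pos assms by blast
  show "continuous_on {a..\<tau>} ?M"
    unfolding M_eq by (intro continuous_intros)
  have "?M a < ?M \<tau>"
    using \<open>?M a \<le> 0\<close> \<open>0 < ?M \<tau>\<close> by simp
  then have "strict_mono ?M"
    unfolding M_eq by (rule exp_affine_strict_mono[OF assms(3)])
  then show "strict_mono_on {a..\<tau>} ?M"
    by (rule monotone_on_subset[OF _ subset_UNIV])
qed

lemma M1_tilde_pos:
  assumes "\<epsilon> \<noteq> 0" and "\<Lambda> > 0" and "\<tau> < \<omega>"
    and "\<Lambda> > Lambda_FP \<epsilon> \<tau>1 a \<tau> \<omega>" and "\<zeta> \<in> {a..<\<tau>}"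
  shows "M1_tilde \<epsilon> \<tau>1 \<Lambda> \<omega> \<tau> \<zeta> > 0"
proof -
  let ?M = "M1_tilde \<epsilon> \<tau>1 \<Lambda> \<omega> \<tau>"
  obtain p q where M_eq: "?M = (\<lambda>\<zeta>. p + q * exp (- \<epsilon> * \<zeta>))"
    using M1_tilde_exp_affine by fast
  have "?M a > 0"
    using M1_tilde_at_entry_nonpos_iff[OF assms(1,3), of \<tau>1 \<Lambda> a] assms(4) by linarith
  moreover have "?M \<tau> > 0"
    using M1_tilde_at_retirement_pos assms by blast
  ultimately show ?thesis
    using exp_affine_pos_between[of a \<zeta> \<tau> p q "- \<epsilon>"] assms(5) unfolding M_eq by simp
qed

theorem theorem3p1:
  fixes r \<mu> \<sigma> \<gamma> \<xi> a \<tau> \<omega> \<tau>1 \<rho> Am Bm c :: real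
  assumes "r > 0" and "\<mu> > r" and "\<sigma> > 0"
    and "eps_param r \<mu> \<sigma> \<gamma> \<xi> \<noteq> 0"
    and "a < \<tau>" and "\<tau> < \<omega>"
    and "0 \<le> \<tau>1" and "\<tau>1 < 1"
    and "c > 0" and "c \<noteq> 1"
    and "inv_dep_ratio \<rho> Am Bm c a \<tau> \<omega> > 0"
  shows
    "(inv_dep_ratio \<rho> Am Bm c a \<tau> \<omega> \<le> Lambda_FP (eps_param r \<mu> \<sigma> \<gamma> \<xi>) \<tau>1 a \<tau> \<omega> \<longrightarrow>
       (\<exists>\<zeta>h \<in> {a..<\<tau>}.
          (\<forall>\<zeta>. a \<le> \<zeta> \<and> \<zeta> < \<zeta>h \<longrightarrow>
             M1_tilde (eps_param r \<mu> \<sigma> \<gamma> \<xi>) \<tau>1 (inv_dep_ratio \<rho> Am Bm c a \<tau> \<omega>) \<omega> \<tau> \<zeta> < 0) \<and>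
          M1_tilde (eps_param r \<mu> \<sigma> \<gamma> \<xi>) \<tau>1 (inv_dep_ratio \<rho> Am Bm c a \<tau> \<omega>) \<omega> \<tau> \<zeta>h = 0 \<and>
          (\<forall>\<zeta>. \<zeta>h < \<zeta> \<and> \<zeta> < \<tau> \<longrightarrow>
             M1_tilde (eps_param r \<mu> \<sigma> \<gamma> \<xi>) \<tau>1 (inv_dep_ratio \<rho> Am Bm c a \<tau> \<omega>) \<omega> \<tau> \<zeta> > 0)))
     \<and>
     (inv_dep_ratio \<rho> Am Bm c a \<tau> \<omega> > Lambda_FP (eps_param r \<mu> \<sigma> \<gamma> \<xi>) \<tau>1 a \<tau> \<omega> \<longrightarrow>
       (\<forall>\<zeta> \<in> {a..<\<tau>}.
          M1_tilde (eps_param r \<mu> \<sigma> \<gamma> \<xi>) \<tau>1 (inv_dep_ratio \<rho> Am Bm c a \<tau> \<omega>) \<omega> \<tau> \<zeta> > 0))"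
  using M1_tilde_sign_change[OF assms(4,11,5,6)] M1_tilde_pos[OF assms(4,11,6)]
  by blast

end
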